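(* Let $\ell,\beta,m,s>0$ and $d_{11},d_{22},d_{21},\xi\ge 0$, and consider the Holling–Tanner system with spatial memory and predator-taxis \[ \begin{aligned} u_t&=d_{11}u_{xx}+\xi\,(u\,v_x)_x+u(1-\beta u)-\frac{muv}{1+u},\\ v_t&=d_{22}v_{xx}-d_{21}\,\big(v(x,t)\,u_x(x,t-\tau)\big)_x+sv\Big(1-\frac{v}{u}\Big), \end{aligned}\qquad x\in(0,\ell\pi),\ t>0, \] with homogeneous Neumann boundary conditions $u_x=v_x=0$ at $x=0,\ell\pi$ and memory delay $\tau\ge0$. Let $E_*=(u_*,v_* )$, the quantities $a_{ij}$, $T_n$, $J_n$, $K_n$, $P_n$, $Q_n$, $n_1,n_2$, $\omega_n$, $\tau_{n,j}$ be as defined in the context. Suppose that $d_{11}d_{22}-d_{21}\xi u_*v_*>0$, that condition $a_{11}<0$ holds, and that \[ \operatorname{Det}(A)>0,\quad \widetilde A_1>0,\quad \widetilde A_1^2-4\widetilde A_2\operatorname{Det}(A)>0 . \] Let $n\in\mathbb{N}$ with $n_1<n<n_2$ and $j\in\mathbb{N}_0$, and let $\lambda(\tau)$ be the root of the characteristic equation \[ \lambda^2-T_n\lambda+\widetilde J_n(\tau)=0,\qquad \widetilde J_n(\tau)=\big(d_{11}d_{22}+d_{21}\xi u_*v_*e^{-\lambda\tau}\big)\frac{n^4}{\ell^4}-\big(d_{11}a_{22}+d_{22}a_{11}-a_{21}\xi u_*+d_{21}v_*a_{12}e^{-\lambda\tau}\big)\frac{n^2}{\ell^2}+\operatorname{Det}(A),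 \] depending smoothly on $\tau$ near $\tau_{n,j}$ with $\lambda(\tau_{n,j})=i\omega_n$. Then \[ \left.\frac{d\,\operatorname{Re}\lambda(\tau)}{d\tau}\right|_{\tau=\tau_{n,j}}>0 . \]
   Context: Definitions: $u_*=v_*=\frac{1}{2\beta}\big(\sqrt{R^2+4\beta}-R\big)$ with $R=\beta+m-1$ (the positive constant steady state). $a_{11}=1-2\beta u_*-\frac{mu_*}{(1+u_* )^2}$, $a_{12}=-\frac{mu_*}{1+u_*}$, $a_{21}=s$, $a_{22}=-s$; $A=(a_{ij})$, $\operatorname{Det}(A)=a_{11}a_{22}-a_{12}a_{21}$. For $n\in\mathbb{N}_0$: $T_n=a_{11}+a_{22}-(d_{11}+d_{22})\frac{n^2}{\ell^2}$; $J_n=d_{11}d_{22}\frac{n^4}{\ell^4}-(d_{11}a_{22}+d_{22}a_{11}-a_{21}\xi u_* )\frac{n^2}{\ell^2}+\operatorname{Det}(A)$; $K_n=d_{21}\xi u_*v_*\frac{n^4}{\ell^4}-d_{21}v_*a_{12}\frac{n^2}{\ell^2}$; $P_n=T_n^2-2J_n$; $Q_n=(J_n+K_n)(J_n-K_n)$. Further $\widetilde A_1=d_{11}a_{22}+d_{22}a_{11}-a_{21}\xi u_*-d_{21}v_*a_{12}$, $\widetilde A_2=d_{11}d_{22}-d_{21}\xi u_*v_*$, $\widetilde A_3=\widetilde A_1^2-4\widetilde A_2\operatorname{Det}(A)$, $\widetilde x_{1,2}=\frac{\widetilde A_1\mp\sqrt{\widetilde A_3}}{2\widetilde A_2}$,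 $n_1=\ell\sqrt{\widetilde x_1}$, $n_2=\ell\sqrt{\widetilde x_2}$. For $n_1<n<n_2$: $\omega_n=\sqrt{\frac{-P_n+\sqrt{P_n^2-4Q_n}}{2}}$ and $\tau_{n,j}=\frac{1}{\omega_n}\Big(\arccos\frac{\omega_n^2-J_n}{K_n}+2j\pi\Big)$, $j\in\mathbb{N}_0$. *)

theory Defs
  imports "HOL-Analysis.Analysis"
begin

definition ustar :: "real \<Rightarrow> real \<Rightarrow> real" where
  "ustar beta m = (let R = beta + m - 1 in (sqrt (R^2 + 4*beta) - R) / (2*beta))"

definition vstar :: "real \<Rightarrow> real \<Rightarrow> real" where
  "vstar beta m = ustar beta m"

definition a11 :: "real \<Rightarrow> real \<Rightarrow> real" where
  "a11 beta m = 1 - 2*beta*ustar beta m - m * ustar beta m / (1 + ustar beta m)^2"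

definition a12 :: "real \<Rightarrow> real \<Rightarrow> real" where
  "a12 beta m = - (m * ustar beta m / (1 + ustar beta m))"

definition a21 :: "real \<Rightarrow> real" where
  "a21 s = s"

definition a22 :: "real \<Rightarrow> real" where
  "a22 s = - s"

definition DetA :: "real \<Rightarrow> real \<Rightarrow> real \<Rightarrow> real" where
  "DetA beta m s = a11 beta m * a22 s - a12 beta m * a21 s"

definition Tn :: "real \<Rightarrow> real \<Rightarrow> real \<Rightarrow> real \<Rightarrow> real \<Rightarrow> real \<Rightarrow> nat \<Rightarrow> real" where
  "Tn l beta m s d11 d22 n = a11 beta m + a22 s - (d11 + d22) * (real n)^2 / l^2"

definition Jn :: "real \<Rightarrow> real \<Rightarrow> real \<Rightarrow> real \<Rightarrow> real \<Rightarrow> real \<Rightarrow> real \<Rightarrow> nat \<Rightarrow> real" where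
  "Jn l beta m s d11 d22 xi n =
     d11 * d22 * (real n)^4 / l^4
     - (d11 * a22 s + d22 * a11 beta m - a21 s * xi * ustar beta m) * (real n)^2 / l^2
     + DetA beta m s"

definition Kn :: "real \<Rightarrow> real \<Rightarrow> real \<Rightarrow> real \<Rightarrow> real \<Rightarrow> nat \<Rightarrow> real" where
  "Kn l beta m d21 xi n =
     d21 * xi * ustar beta m * vstar beta m * (real n)^4 / l^4
     - d21 * vstar beta m * a12 beta m * (real n)^2 / l^2"

definition Pn :: "real \<Rightarrow> real \<Rightarrow> real \<Rightarrow> real \<Rightarrow> real \<Rightarrow> real \<Rightarrow> real \<Rightarrow> nat \<Rightarrow> real" where
  "Pn l beta m s d11 d22 xi n = (Tn l beta m s d11 d22 n)^2 - 2 * Jn l beta m s d11 d22 xi n"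

definition Qn :: "real \<Rightarrow> real \<Rightarrow> real \<Rightarrow> real \<Rightarrow> real \<Rightarrow> real \<Rightarrow> real \<Rightarrow> real \<Rightarrow> nat \<Rightarrow> real" where
  "Qn l beta m s d11 d22 d21 xi n =
     (Jn l beta m s d11 d22 xi n + Kn l beta m d21 xi n) * (Jn l beta m s d11 d22 xi n - Kn l beta m d21 xi n)"

definition At1 :: "real \<Rightarrow> real \<Rightarrow> real \<Rightarrow> real \<Rightarrow> real \<Rightarrow> real \<Rightarrow> real \<Rightarrow> real" where
  "At1 beta m s d11 d22 d21 xi =
     d11 * a22 s + d22 * a11 beta m - a21 s * xi * ustar beta m - d21 * vstar beta m * a12 beta m"

definition At2 :: "real \<Rightarrow> real \<Rightarrow> real \<Rightarrow> real \<Rightarrow> real \<Rightarrow> real \<Rightarrow> real" where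
  "At2 beta m d11 d22 d21 xi = d11 * d22 - d21 * xi * ustar beta m * vstar beta m"

definition At3 :: "real \<Rightarrow> real \<Rightarrow> real \<Rightarrow> real \<Rightarrow> real \<Rightarrow> real \<Rightarrow> real \<Rightarrow> real" where
  "At3 beta m s d11 d22 d21 xi =
     (At1 beta m s d11 d22 d21 xi)^2 - 4 * At2 beta m d11 d22 d21 xi * DetA beta m s"

definition xt1 :: "real \<Rightarrow> real \<Rightarrow> real \<Rightarrow> real \<Rightarrow> real \<Rightarrow> real \<Rightarrow> real \<Rightarrow> real" where
  "xt1 beta m s d11 d22 d21 xi =
     (At1 beta m s d11 d22 d21 xi - sqrt (At3 beta m s d11 d22 d21 xi)) / (2 * At2 beta m d11 d22 d21 xi)"

definition xt2 :: "real \<Rightarrow> real \<Rightarrow> real \<Rightarrow> real \<Rightarrow> real \<Rightarrow> real \<Rightarrow> real \<Rightarrow> real" where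
  "xt2 beta m s d11 d22 d21 xi =
     (At1 beta m s d11 d22 d21 xi + sqrt (At3 beta m s d11 d22 d21 xi)) / (2 * At2 beta m d11 d22 d21 xi)"

definition n1 :: "real \<Rightarrow> real \<Rightarrow> real \<Rightarrow> real \<Rightarrow> real \<Rightarrow> real \<Rightarrow> real \<Rightarrow> real \<Rightarrow> real" where
  "n1 l beta m s d11 d22 d21 xi = l * sqrt (xt1 beta m s d11 d22 d21 xi)"

definition n2 :: "real \<Rightarrow> real \<Rightarrow> real \<Rightarrow> real \<Rightarrow> real \<Rightarrow> real \<Rightarrow> real \<Rightarrow> real \<Rightarrow> real" where
  "n2 l beta m s d11 d22 d21 xi = l * sqrt (xt2 beta m s d11 d22 d21 xi)"

definition omega_n :: "real \<Rightarrow> real \<Rightarrow> real \<Rightarrow> real \<Rightarrow> real \<Rightarrow> real \<Rightarrow> real \<Rightarrow> real \<Rightarrow> nat \<Rightarrow> real" where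
  "omega_n l beta m s d11 d22 d21 xi n =
     sqrt ((- Pn l beta m s d11 d22 xi n
            + sqrt ((Pn l beta m s d11 d22 xi n)^2 - 4 * Qn l beta m s d11 d22 d21 xi n)) / 2)"

definition tau_nj :: "real \<Rightarrow> real \<Rightarrow> real \<Rightarrow> real \<Rightarrow> real \<Rightarrow> real \<Rightarrow> real \<Rightarrow> real \<Rightarrow> nat \<Rightarrow> nat \<Rightarrow> real" where
  "tau_nj l beta m s d11 d22 d21 xi n j =
     (1 / omega_n l beta m s d11 d22 d21 xi n) *
     (arccos (((omega_n l beta m s d11 d22 d21 xi n)^2 - Jn l beta m s d11 d22 xi n)
               / Kn l beta m d21 xi n) + 2 * real j * pi)"

definition charfun :: "real \<Rightarrow> real \<Rightarrow> real \<Rightarrow> real \<Rightarrow> real \<Rightarrow> real \<Rightarrow> real \<Rightarrow> real \<Rightarrow> nat \<Rightarrow> complex \<Rightarrow> real \<Rightarrow> complex" where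
  "charfun l beta m s d11 d22 d21 xi n lam tau =
     lam^2 - complex_of_real (Tn l beta m s d11 d22 n) * lam
     + (complex_of_real (d11 * d22) + complex_of_real (d21 * xi * ustar beta m * vstar beta m) * exp (- lam * complex_of_real tau))
         * complex_of_real ((real n)^4 / l^4)
     - (complex_of_real (d11 * a22 s + d22 * a11 beta m - a21 s * xi * ustar beta m)
         + complex_of_real (d21 * vstar beta m * a12 beta m) * exp (- lam * complex_of_real tau))
         * complex_of_real ((real n)^2 / l^2)
     + complex_of_real (DetA beta m s)"

end

theory Submission
  imports Defs
begin

text \<open>
  The characteristic function is \<open>\<lambda>\<^sup>2 - T \<lambda> + J + K exp (- \<lambda> \<tau>)\<close> with
  \<open>T = T\<^sub>n\<close>, \<open>J = J\<^sub>n\<close>, \<open>K = K\<^sub>n\<close>. Differentiating it along the root curve and using the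
  equation itself at \<open>\<lambda> = i \<omega>\<close> to eliminate \<open>K exp (- i \<omega> \<tau>)\<close>, one finds that
  \<open>Re \<lambda>'\<close> has the sign of \<open>\<omega>\<^sup>2 (T\<^sup>2 - 2 J + 2 \<omega>\<^sup>2)\<close>, whatever the delay.
  As \<open>\<omega>\<^sub>n\<^sup>2\<close> is the larger root of \<open>x\<^sup>2 + P\<^sub>n x + Q\<^sub>n\<close>, this factor equals
  \<open>sqrt (P\<^sub>n\<^sup>2 - 4 Q\<^sub>n) > 0\<close> once \<open>Q\<^sub>n = (J + K) (J - K) < 0\<close>. Here \<open>J + K > 0\<close> termwise
  under the sign conditions, while \<open>J - K\<close> is the quadratic \<open>A\<^sub>2 x\<^sup>2 - A\<^sub>1 x + Det A\<close> in
  \<open>x = n\<^sup>2 / \<ell>\<^sup>2\<close>, negative strictly between its roots \<open>x\<^sub>1\<close> and \<open>x\<^sub>2\<close>.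
\<close>

definition delay_charpoly :: "real \<Rightarrow> real \<Rightarrow> real \<Rightarrow> complex \<Rightarrow> real \<Rightarrow> complex" where
  "delay_charpoly T J K z t =
     z\<^sup>2 - of_real T * z + of_real J + of_real K * exp (- z * of_real t)"

lemma has_vector_derivative_delay_charpoly:
  fixes lam :: "real \<Rightarrow> complex"
  assumes "(lam has_vector_derivative lam') (at t0)"
  shows "((\<lambda>t. delay_charpoly T J K (lam t) t) has_vector_derivative
           (2 * lam t0 - of_real T - of_real (t0 * K) * exp (- lam t0 * of_real t0)) * lam'
           - lam t0 * of_real K * exp (- lam t0 * of_real t0)) (at t0)"
proof -
  have "((\<lambda>t. - lam t * of_real t) has_vector_derivative - (lam t0 + lam' * of_real t0)) (at t0)"
    by (auto intro!: derivative_eq_intros assms)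
  from field_vector_diff_chain_at[OF this DERIV_exp]
  have "((\<lambda>t. exp (- lam t * of_real t)) has_vector_derivative
          - (lam t0 + lam' * of_real t0) * exp (- lam t0 * of_real t0)) (at t0)"
    by (simp add: o_def)
  then show ?thesis
    unfolding delay_charpoly_def
    by (auto intro!: derivative_eq_intros assms simp: power2_eq_square algebra_simps)
qed

lemma delay_charpoly_root_curve_slope:
  fixes lam :: "real \<Rightarrow> complex"
  assumes zero: "\<forall>\<^sub>F t in nhds t0. delay_charpoly T J K (lam t) t = 0"
    and deriv: "(lam has_vector_derivative lam') (at t0)"
  shows "(2 * lam t0 - of_real T - of_real (t0 * K) * exp (- lam t0 * of_real t0)) * lam'
           = lam t0 * of_real K * exp (- lam t0 * of_real t0)"
proof -
  have "((\<lambda>t. delay_charpoly T J K (lam t) t) has_vector_derivative 0) (at t0)"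
    using has_vector_derivative_cong_ev[where f = "\<lambda>t. delay_charpoly T J K (lam t) t"
        and g = "\<lambda>_. 0" and S = UNIV]
      zero eventually_nhds_x_imp_x[OF zero]
    by simp
  from vector_derivative_unique_at[OF has_vector_derivative_delay_charpoly[OF deriv] this]
  show ?thesis
    by simp
qed

lemma delay_charpoly_crossing_direction:
  fixes T J K w t0 :: real and lam' :: complex
  defines "E \<equiv> exp (- (\<i> * of_real w) * of_real t0)"
  assumes root: "delay_charpoly T J K (\<i> * of_real w) t0 = 0"
    and slope: "(2 * (\<i> * of_real w) - of_real T - of_real (t0 * K) * E) * lam'
                  = \<i> * of_real w * of_real K * E"
    and "w > 0" and "T\<^sup>2 - 2 * J + 2 * w\<^sup>2 > 0"
  shows "Re lam' > 0"
proof -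
  define W where "W = of_real K * E"
  define M where "M = 2 * (\<i> * of_real w) - of_real T - of_real t0 * W"
  have W: "W = Complex (w\<^sup>2 - J) (T * w)"
    using root by (simp add: delay_charpoly_def W_def E_def complex_eq_iff power2_eq_square)
  have slope': "lam' * M = \<i> * of_real w * W"
    using slope by (simp add: M_def W_def mult.commute mult.left_commute)
  have "Re lam' * (cmod M)\<^sup>2 = Re (lam' * M * cnj M)"
    unfolding mult.assoc complex_norm_square[symmetric] by simp
  also have "\<dots> = Re (\<i> * of_real w * W * cnj M)"
    by (simp only: slope')
  also have "\<dots> = w\<^sup>2 * (T\<^sup>2 - 2 * J + 2 * w\<^sup>2)"
    by (simp add: M_def W power2_eq_square algebra_simps)
  finally have "Re lam' * (cmod M)\<^sup>2 > 0"
    using assms(4,5) by simp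
  then show ?thesis
    by (simp add: zero_less_mult_iff)
qed

lemma delay_charpoly_root_crossing:
  fixes lam :: "real \<Rightarrow> complex"
  assumes "\<forall>\<^sub>F t in nhds t0. delay_charpoly T J K (lam t) t = 0"
    and "lam t0 = \<i> * of_real w"
    and "(lam has_vector_derivative lam') (at t0)"
    and "w > 0" and "T\<^sup>2 - 2 * J + 2 * w\<^sup>2 > 0"
  shows "Re lam' > 0"
proof (rule delay_charpoly_crossing_direction)
  show "delay_charpoly T J K (\<i> * of_real w) t0 = 0"
    using eventually_nhds_x_imp_x[OF assms(1)] assms(2) by simp
  show "(2 * (\<i> * of_real w) - of_real T - of_real (t0 * K) * exp (- (\<i> * of_real w) * of_real t0)) * lam'
          = \<i> * of_real w * of_real K * exp (- (\<i> * of_real w) * of_real t0)"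
    using delay_charpoly_root_curve_slope[OF assms(1,3)] assms(2) by simp
qed (use assms in auto)

lemma biquadratic_larger_root:
  fixes P Q :: real
  assumes "Q < 0"
  defines "w \<equiv> sqrt ((- P + sqrt (P\<^sup>2 - 4 * Q)) / 2)"
  shows "w > 0" and "P + 2 * w\<^sup>2 > 0"
proof -
  have disc: "P\<^sup>2 - 4 * Q > 0"
    using assms(1) zero_le_power2[of P] by linarith
  have "\<bar>P\<bar> < sqrt (P\<^sup>2 - 4 * Q)"
    using assms(1) by (intro real_less_rsqrt) simp
  then have "- P < sqrt (P\<^sup>2 - 4 * Q)" and "P < sqrt (P\<^sup>2 - 4 * Q)"
    by (simp_all add: abs_less_iff)
  then show "w > 0" and "P + 2 * w\<^sup>2 > 0"
    using disc unfolding w_def by (simp_all add: field_simps)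
qed

lemma quadratic_neg_between_roots:
  fixes a b c x :: real
  assumes "a > 0" and "b\<^sup>2 - 4 * a * c \<ge> 0"
    and "(b - sqrt (b\<^sup>2 - 4 * a * c)) / (2 * a) < x"
    and "x < (b + sqrt (b\<^sup>2 - 4 * a * c)) / (2 * a)"
  shows "a * x\<^sup>2 - b * x + c < 0"
proof -
  have "\<bar>2 * a * x - b\<bar> < sqrt (b\<^sup>2 - 4 * a * c)"
    using assms(1,3,4) by (simp add: field_simps abs_less_iff)
  then have "(2 * a * x - b)\<^sup>2 < b\<^sup>2 - 4 * a * c"
    using assms(2) real_sqrt_abs real_sqrt_less_iff by metis
  then have "4 * a * (a * x\<^sup>2 - b * x + c) < 0"
    by (simp add: power2_eq_square algebra_simps)
  then show ?thesis
    using assms(1) by (simp add: mult_less_0_iff)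
qed

lemma Jn_eq:
  "Jn l beta m s d11 d22 xi n
     = d11 * d22 * ((real n / l)\<^sup>2)\<^sup>2
       - (d11 * a22 s + d22 * a11 beta m - a21 s * xi * ustar beta m) * (real n / l)\<^sup>2
       + DetA beta m s"
  by (simp add: Jn_def power_divide flip: power_mult)

lemma Kn_eq:
  "Kn l beta m d21 xi n
     = d21 * xi * ustar beta m * vstar beta m * ((real n / l)\<^sup>2)\<^sup>2
       - d21 * vstar beta m * a12 beta m * (real n / l)\<^sup>2"
  by (simp add: Kn_def power_divide flip: power_mult)

lemma charfun_eq_delay_charpoly:
  "charfun l beta m s d11 d22 d21 xi n
     = delay_charpoly (Tn l beta m s d11 d22 n) (Jn l beta m s d11 d22 xi n) (Kn l beta m d21 xi n)"
proof -
  have "real n ^ 4 / l ^ 4 = ((real n / l)\<^sup>2)\<^sup>2" and "(real n)\<^sup>2 / l\<^sup>2 = (real n / l)\<^sup>2"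
    by (simp_all add: power_divide flip: power_mult)
  then show ?thesis
    unfolding charfun_def delay_charpoly_def Jn_eq Kn_eq
    by (intro ext) (simp add: algebra_simps del: of_real_power)
qed

lemma ustar_pos: "beta > 0 \<Longrightarrow> ustar beta m > 0"
  using real_less_rsqrt[of "beta + m - 1" "(beta + m - 1)\<^sup>2 + 4 * beta"]
  by (simp add: ustar_def Let_def)

lemma Jn_plus_Kn_pos:
  assumes "beta > 0" "m > 0" "s > 0" "d11 \<ge> 0" "d22 \<ge> 0" "d21 \<ge> 0" "xi \<ge> 0"
    and "a11 beta m < 0" "DetA beta m s > 0"
  shows "Jn l beta m s d11 d22 xi n + Kn l beta m d21 xi n > 0"
proof -
  define u X where "u = ustar beta m" and "X = (real n / l)\<^sup>2"
  have "u > 0"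
    using ustar_pos assms(1) by (simp add: u_def)
  then have "a12 beta m < 0"
    using assms(2) by (simp add: a12_def flip: u_def)
  have "Jn l beta m s d11 d22 xi n + Kn l beta m d21 xi n
          = (d11 * d22 + d21 * xi * u\<^sup>2) * X\<^sup>2
            + (d11 * s + d22 * (- a11 beta m) + s * xi * u + d21 * u * (- a12 beta m)) * X
            + DetA beta m s"
    unfolding Jn_eq Kn_eq a21_def a22_def vstar_def u_def[symmetric] X_def[symmetric]
    by (simp add: algebra_simps power2_eq_square)
  also have "\<dots> > 0"
    using assms \<open>u > 0\<close> \<open>a12 beta m < 0\<close>
    by (intro add_nonneg_pos add_nonneg_nonneg mult_nonneg_nonneg) (auto simp: X_def)
  finally show ?thesis .
qed

lemma wavenumber_sq_between_xt:
  assumes "l > 0"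
    and "n1 l beta m s d11 d22 d21 xi < real n" "real n < n2 l beta m s d11 d22 d21 xi"
  shows "xt1 beta m s d11 d22 d21 xi < (real n / l)\<^sup>2"
    and "(real n / l)\<^sup>2 < xt2 beta m s d11 d22 d21 xi"
proof -
  have "sqrt ((real n / l)\<^sup>2) = real n / l"
    using assms(1) by simp
  moreover have "sqrt (xt1 beta m s d11 d22 d21 xi) < real n / l"
    and "real n / l < sqrt (xt2 beta m s d11 d22 d21 xi)"
    using assms by (simp_all add: n1_def n2_def field_simps)
  ultimately show "xt1 beta m s d11 d22 d21 xi < (real n / l)\<^sup>2"
    and "(real n / l)\<^sup>2 < xt2 beta m s d11 d22 d21 xi"
    by (metis real_sqrt_less_iff)+
qed

lemma Jn_minus_Kn_neg:
  assumes "l > 0" and "At2 beta m d11 d22 d21 xi > 0"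
    and "(At1 beta m s d11 d22 d21 xi)\<^sup>2 - 4 * At2 beta m d11 d22 d21 xi * DetA beta m s > 0"
    and "n1 l beta m s d11 d22 d21 xi < real n" "real n < n2 l beta m s d11 d22 d21 xi"
  shows "Jn l beta m s d11 d22 xi n - Kn l beta m d21 xi n < 0"
proof -
  have "Jn l beta m s d11 d22 xi n - Kn l beta m d21 xi n
          = At2 beta m d11 d22 d21 xi * ((real n / l)\<^sup>2)\<^sup>2
            - At1 beta m s d11 d22 d21 xi * (real n / l)\<^sup>2 + DetA beta m s"
    unfolding Jn_eq Kn_eq At1_def At2_def by (simp add: algebra_simps)
  also have "\<dots> < 0"
    using assms wavenumber_sq_between_xt[OF assms(1,4,5)]
    by (intro quadratic_neg_between_roots) (simp_all add: xt1_def xt2_def At3_def)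
  finally show ?thesis .
qed

theorem lemma4p3:
  fixes l beta m s d11 d22 d21 xi :: real
    and n j :: nat
    and lam :: "real \<Rightarrow> complex" and lam' :: complex
  assumes "l > 0" "beta > 0" "m > 0" "s > 0"
    and "d11 \<ge> 0" "d22 \<ge> 0" "d21 \<ge> 0" "xi \<ge> 0"
    and "d11 * d22 - d21 * xi * ustar beta m * vstar beta m > 0"
    and "a11 beta m < 0"
    and "DetA beta m s > 0"
    and "At1 beta m s d11 d22 d21 xi > 0"
    and "(At1 beta m s d11 d22 d21 xi)^2 - 4 * At2 beta m d11 d22 d21 xi * DetA beta m s > 0"
    and "n \<ge> 1"
    and "n1 l beta m s d11 d22 d21 xi < real n" "real n < n2 l beta m s d11 d22 d21 xi"
    and "\<forall>\<^sub>F tau in nhds (tau_nj l beta m s d11 d22 d21 xi n j).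
           charfun l beta m s d11 d22 d21 xi n (lam tau) tau = 0"
    and "lam (tau_nj l beta m s d11 d22 d21 xi n j) = \<i> * complex_of_real (omega_n l beta m s d11 d22 d21 xi n)"
    and "(lam has_vector_derivative lam') (at (tau_nj l beta m s d11 d22 d21 xi n j))"
  shows "Re lam' > 0"
proof -
  have "Jn l beta m s d11 d22 xi n + Kn l beta m d21 xi n > 0"
    using assms by (intro Jn_plus_Kn_pos)
  moreover have "Jn l beta m s d11 d22 xi n - Kn l beta m d21 xi n < 0"
    using assms by (intro Jn_minus_Kn_neg) (simp_all add: At2_def)
  ultimately have "Qn l beta m s d11 d22 d21 xi n < 0"
    by (simp add: Qn_def mult_pos_neg)
  from biquadratic_larger_root[OF this, of "Pn l beta m s d11 d22 xi n"]
  have "omega_n l beta m s d11 d22 d21 xi n > 0"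
    and "(Tn l beta m s d11 d22 n)\<^sup>2 - 2 * Jn l beta m s d11 d22 xi n
           + 2 * (omega_n l beta m s d11 d22 d21 xi n)\<^sup>2 > 0"
    by (simp_all add: omega_n_def Pn_def)
  with assms(17-19) show ?thesis
    unfolding charfun_eq_delay_charpoly by (intro delay_charpoly_root_crossing)
qed

end
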